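(* Let $G$ be the disjointness graph of a finite family of non-wide $2$-way infinite $3$-monotone chains in the plane. Then $\chi(G)\le\omega(G)^3$.
   Context: A curve is $x$-monotone if every vertical line meets it in at most one point. A $2$-way infinite $3$-monotone chain is a (possibly self-intersecting) continuous curve in the plane that is the union of $3$ consecutive $x$-monotone pieces, consecutive pieces sharing an endpoint, with the first and last pieces having unbounded projections to the $x$-axis. It is non-wide if some vertical line does not meet it. The disjointness graph of a family has the members as vertices, two adjacent if and only if they are disjoint; $\chi$ and $\omega$ denote chromatic and clique number. *)

theory Defs
  imports "HOL-Analysis.Analysis"
begin

type_synonym point = "real \<times> real"

definition xgraph :: "real set \<Rightarrow> (real \<Rightarrow> real) \<Rightarrow> point set" where
  "xgraph I f = (\<lambda>x. (x, f x)) ` I"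

definition closed_ray :: "real \<Rightarrow> real set \<Rightarrow> bool" where
  "closed_ray a R \<longleftrightarrow> R = {..a} \<or> R = {a..}"

text \<open>A 2-way infinite 3-monotone chain: union of three consecutive x-monotone
  pieces (graphs of continuous functions over intervals), consecutive pieces sharing
  an endpoint, the first and last piece having unbounded projections.\<close>
definition two_way_inf_3mono_chain :: "point set \<Rightarrow> bool" where
  "two_way_inf_3mono_chain C \<longleftrightarrow>
     (\<exists>a b R1 R3 f1 f2 f3.
        closed_ray a R1 \<and> closed_ray b R3 \<and>
        continuous_on R1 f1 \<and> continuous_on (closed_segment a b) f2 \<and>
        continuous_on R3 f3 \<and>
        f1 a = f2 a \<and> f2 b = f3 b \<and>
        C = xgraph R1 f1 \<union> xgraph (closed_segment a b) f2 \<union> xgraph R3 f3)"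

definition non_wide :: "point set \<Rightarrow> bool" where
  "non_wide C \<longleftrightarrow> (\<exists>x0. \<forall>p\<in>C. fst p \<noteq> x0)"

definition disjointness_edge :: "('v \<Rightarrow> point set) \<Rightarrow> 'v \<Rightarrow> 'v \<Rightarrow> bool" where
  "disjointness_edge C u v \<longleftrightarrow> u \<noteq> v \<and> C u \<inter> C v = {}"

definition chromatic_number :: "'v set \<Rightarrow> ('v \<Rightarrow> 'v \<Rightarrow> bool) \<Rightarrow> nat" where
  "chromatic_number V E =
     (LEAST k. \<exists>c :: 'v \<Rightarrow> nat. (\<forall>v\<in>V. c v < k) \<and>
                  (\<forall>u\<in>V. \<forall>v\<in>V. E u v \<longrightarrow> c u \<noteq> c v))"

definition clique_number :: "'v set \<Rightarrow> ('v \<Rightarrow> 'v \<Rightarrow> bool) \<Rightarrow> nat" where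
  "clique_number V E =
     Max {card S | S. S \<subseteq> V \<and> (\<forall>u\<in>S. \<forall>v\<in>S. u \<noteq> v \<longrightarrow> E u v)}"

end

theory Submission
  imports Defs
begin

(* A non-wide chain misses some vertical line, which forces both unbounded pieces to point
   the same way: the chain is a hairpin, the union of the graphs of two continuous functions
   lower <= upper over a ray, meeting at its finite end (the tip). Two disjoint hairpins
   cannot cross, so by the intermediate value theorem, started at a tip lying in the common
   domain, one is nested inside the other or one lies below the other on the common domain.
   Nesting is a strict partial order, and so is "below" once restricted to pairs whose tips
   are ordered (leftward before rightward, then by abscissa) in either of the two possible
   directions: ordered tips make the middle domain contain the intersection of the outer
   ones. Hence the edges of the disjointness graph are covered by three strict partial
   orders whose comparable pairs are adjacent. Chains of such an order are cliques, so its
   height function takes values in 1..omega and separates comparable vertices; the triple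
   of the three heights is a proper colouring with omega^3 colours. *)

section \<open>Colouring graphs covered by strict partial orders\<close>

lemma chromatic_number_le_card:
  assumes "finite K" and "c ` V \<subseteq> K"
    and "\<And>u v. u \<in> V \<Longrightarrow> v \<in> V \<Longrightarrow> E u v \<Longrightarrow> c u \<noteq> c v"
  shows "chromatic_number V E \<le> card K"
proof -
  obtain g where g: "bij_betw g K {0..<card K}"
    using ex_bij_betw_finite_nat[OF assms(1)] by blast
  have "\<forall>v\<in>V. g (c v) < card K"
    using bij_betwE[OF g] assms(2) by auto
  moreover have "g (c u) \<noteq> g (c v)" if "u \<in> V" "v \<in> V" "E u v" for u v
  proof
    assume "g (c u) = g (c v)"
    moreover have "c u \<in> K" "c v \<in> K" using assms(2) that by auto
    ultimately have "c u = c v" using bij_betw_imp_inj_on[OF g] by (simp add: inj_on_eq_iff)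
    then show False using assms(3) that by blast
  qed
  ultimately show ?thesis
    unfolding chromatic_number_def by (intro Least_le exI[of _ "\<lambda>v. g (c v)"]) blast
qed

lemma card_clique_le_clique_number:
  assumes "finite V" and "S \<subseteq> V" and "\<forall>u\<in>S. \<forall>v\<in>S. u \<noteq> v \<longrightarrow> E u v"
  shows "card S \<le> clique_number V E"
proof -
  let ?sizes = "{card S | S. S \<subseteq> V \<and> (\<forall>u\<in>S. \<forall>v\<in>S. u \<noteq> v \<longrightarrow> E u v)}"
  have "?sizes \<subseteq> card ` Pow V" by auto
  then have "finite ?sizes"
    using assms(1) finite_subset by blast
  moreover have "card S \<in> ?sizes"
    using assms(2,3) by blast
  ultimately show ?thesis
    unfolding clique_number_def by (rule Max_ge)
qed

definition chains_ending_at :: "'v set \<Rightarrow> ('v \<Rightarrow> 'v \<Rightarrow> bool) \<Rightarrow> 'v \<Rightarrow> 'v set set" where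
  "chains_ending_at V R v = {S. S \<subseteq> V \<and> v \<in> S \<and> (\<forall>x\<in>S. x \<noteq> v \<longrightarrow> R x v) \<and>
     (\<forall>x\<in>S. \<forall>y\<in>S. x \<noteq> y \<longrightarrow> R x y \<or> R y x)}"

definition chain_height :: "'v set \<Rightarrow> ('v \<Rightarrow> 'v \<Rightarrow> bool) \<Rightarrow> 'v \<Rightarrow> nat" where
  "chain_height V R v = Max (card ` chains_ending_at V R v)"

lemma finite_chain_sizes:
  assumes "finite V"
  shows "finite (card ` chains_ending_at V R v)"
proof -
  have "chains_ending_at V R v \<subseteq> Pow V" by (auto simp: chains_ending_at_def)
  then have "finite (chains_ending_at V R v)" using assms finite_subset by auto
  then show ?thesis by (rule finite_imageI)
qed

lemma chain_height_attained:
  assumes "finite V" and "v \<in> V"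
  shows "chain_height V R v \<in> card ` chains_ending_at V R v"
proof -
  have "{v} \<in> chains_ending_at V R v"
    using assms(2) by (auto simp: chains_ending_at_def)
  then have "card ` chains_ending_at V R v \<noteq> {}" by blast
  then show ?thesis
    unfolding chain_height_def by (rule Max_in[OF finite_chain_sizes[OF assms(1)]])
qed

lemma chain_height_ge:
  assumes "finite V" and "S \<in> chains_ending_at V R v"
  shows "card S \<le> chain_height V R v"
  unfolding chain_height_def by (rule Max_ge[OF finite_chain_sizes[OF assms(1)] imageI[OF assms(2)]])

lemma chain_height_bounds:
  assumes "finite V" and "symp E" and "\<And>u v. u \<in> V \<Longrightarrow> v \<in> V \<Longrightarrow> R u v \<Longrightarrow> E u v"
    and "v \<in> V"
  shows "chain_height V R v \<in> {1..clique_number V E}"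
proof -
  obtain S where S: "S \<in> chains_ending_at V R v" and height: "chain_height V R v = card S"
    using chain_height_attained[OF assms(1,4)] by blast
  have "card S \<le> clique_number V E"
  proof (rule card_clique_le_clique_number[OF assms(1)])
    show "S \<subseteq> V" using S by (simp add: chains_ending_at_def)
    show "\<forall>x\<in>S. \<forall>y\<in>S. x \<noteq> y \<longrightarrow> E x y"
    proof (intro ballI impI)
      fix x y assume "x \<in> S" "y \<in> S" "x \<noteq> y"
      then have "R x y \<or> R y x" and "x \<in> V" and "y \<in> V"
        using S by (auto simp: chains_ending_at_def)
      then show "E x y"
        using assms(2,3) by (metis sympD)
    qed
  qed
  moreover have "{v} \<in> chains_ending_at V R v"
    using assms(4) by (auto simp: chains_ending_at_def)
  then have "1 \<le> chain_height V R v"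
    using chain_height_ge[OF assms(1)] by fastforce
  ultimately show ?thesis
    using height by simp
qed

lemma chain_height_less:
  assumes "finite V" and "irreflp_on V R" and "transp_on V R"
    and "u \<in> V" and "v \<in> V" and "R u v"
  shows "chain_height V R u < chain_height V R v"
proof -
  obtain S where S: "S \<in> chains_ending_at V R u" and height_u: "chain_height V R u = card S"
    using chain_height_attained[OF assms(1,4)] by blast
  then have "S \<subseteq> V" and below_u: "\<forall>x\<in>S. x \<noteq> u \<longrightarrow> R x u"
    by (auto simp: chains_ending_at_def)
  have below_v: "R x v" if "x \<in> S" for x
  proof (cases "x = u")
    case True
    then show ?thesis using assms(6) by simp
  next
    case False
    then have "R x u" using below_u that by blast
    then show ?thesis
      using assms(3-6) \<open>S \<subseteq> V\<close> that by (meson subsetD transp_onD)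
  qed
  have "v \<notin> S"
    using assms(2,5) below_v unfolding irreflp_on_def by blast
  have "insert v S \<in> chains_ending_at V R v"
    using S below_v assms(5) by (auto simp: chains_ending_at_def)
  then have "card (insert v S) \<le> chain_height V R v"
    by (rule chain_height_ge[OF assms(1)])
  moreover have "card (insert v S) = card S + 1"
    using card_insert_disjoint[OF finite_subset[OF \<open>S \<subseteq> V\<close> assms(1)] \<open>v \<notin> S\<close>] by simp
  ultimately show ?thesis
    using height_u by simp
qed

lemma chromatic_number_le_clique_number_power:
  fixes E :: "'v \<Rightarrow> 'v \<Rightarrow> bool" and Rs :: "('v \<Rightarrow> 'v \<Rightarrow> bool) list"
  assumes "finite V" and "symp E"
    and "\<And>R. R \<in> set Rs \<Longrightarrow> irreflp_on V R \<and> transp_on V R"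
    and "\<And>R u v. R \<in> set Rs \<Longrightarrow> u \<in> V \<Longrightarrow> v \<in> V \<Longrightarrow> R u v \<Longrightarrow> E u v"
    and "\<And>u v. u \<in> V \<Longrightarrow> v \<in> V \<Longrightarrow> E u v \<Longrightarrow> \<exists>R\<in>set Rs. R u v \<or> R v u"
  shows "chromatic_number V E \<le> clique_number V E ^ length Rs"
proof -
  let ?colour = "\<lambda>v. map (\<lambda>R. chain_height V R v) Rs"
  let ?colours = "{xs. set xs \<subseteq> {1..clique_number V E} \<and> length xs = length Rs}"
  have "finite ?colours"
    by (simp add: finite_lists_length_eq)
  moreover have "?colour ` V \<subseteq> ?colours"
    using chain_height_bounds[OF assms(1,2) assms(4)] by auto
  moreover have "?colour u \<noteq> ?colour v" if uv: "u \<in> V" "v \<in> V" "E u v" for u v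
  proof -
    obtain R where R: "R \<in> set Rs" "R u v \<or> R v u"
      using assms(5)[OF uv] by blast
    then have "chain_height V R u \<noteq> chain_height V R v"
      using chain_height_less[OF assms(1)] assms(3)[OF R(1)] uv(1,2) by fastforce
    then show ?thesis
      using R(1) by auto
  qed
  ultimately have "chromatic_number V E \<le> card ?colours"
    by (rule chromatic_number_le_card)
  then show ?thesis
    by (simp add: card_lists_length_eq)
qed

section \<open>Hairpins\<close>

lemma continuous_on_less_on_connected:
  fixes f g :: "'a::topological_space \<Rightarrow> real"
  assumes "connected J" and "continuous_on J f" and "continuous_on J g"
    and "\<forall>x\<in>J. f x \<noteq> g x" and "a \<in> J" and "f a < g a"
  shows "\<forall>x\<in>J. f x < g x"
proof (rule ballI, rule ccontr)
  let ?d = "\<lambda>x. g x - f x"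
  fix x assume "x \<in> J" and "\<not> f x < g x"
  then have "?d x \<le> 0" by simp
  moreover have "0 \<le> ?d a" using assms(6) by simp
  moreover have "connected (?d ` J)"
    by (rule connected_continuous_image[OF continuous_on_diff[OF assms(3,2)] assms(1)])
  ultimately have "0 \<in> ?d ` J"
    using connectedD_interval imageI[OF \<open>x \<in> J\<close>, of ?d] imageI[OF assms(5), of ?d] by blast
  then obtain y where "y \<in> J" and "f y = g y" by auto
  then show False using assms(4) by blast
qed

record hairpin =
  leftward :: bool
  tip :: real
  lower :: "real \<Rightarrow> real"
  upper :: "real \<Rightarrow> real"

definition hdom :: "hairpin \<Rightarrow> real set" where
  "hdom P = (if leftward P then {..tip P} else {tip P..})"

definition hairpin_curve :: "hairpin \<Rightarrow> point set" where
  "hairpin_curve P = {(x, y). x \<in> hdom P \<and> (y = lower P x \<or> y = upper P x)}"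

definition wf_hairpin :: "hairpin \<Rightarrow> bool" where
  "wf_hairpin P \<longleftrightarrow> continuous_on (hdom P) (lower P) \<and> continuous_on (hdom P) (upper P) \<and>
     (\<forall>x\<in>hdom P. lower P x \<le> upper P x) \<and> lower P (tip P) = upper P (tip P)"

definition nested_in :: "hairpin \<Rightarrow> hairpin \<Rightarrow> bool" where
  "nested_in P Q \<longleftrightarrow> hdom P \<subseteq> hdom Q \<and>
     (\<forall>x\<in>hdom P. lower Q x < lower P x \<and> upper P x < upper Q x)"

definition below :: "hairpin \<Rightarrow> hairpin \<Rightarrow> bool" where
  "below P Q \<longleftrightarrow> (\<forall>x\<in>hdom P \<inter> hdom Q. upper P x < lower Q x)"

definition tip_le :: "hairpin \<Rightarrow> hairpin \<Rightarrow> bool" where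
  "tip_le P Q \<longleftrightarrow> (leftward P \<and> \<not> leftward Q) \<or> (leftward P = leftward Q \<and> tip P \<le> tip Q)"

lemma tip_in_hdom [simp]: "tip P \<in> hdom P"
  by (simp add: hdom_def)

lemma convex_hdom [simp]: "convex (hdom P)"
  by (simp add: hdom_def)

lemma tip_in_hdom_cases:
  "tip P \<in> hdom Q \<or> tip Q \<in> hdom P \<or> hdom P \<inter> hdom Q = {}"
  by (simp add: hdom_def disjoint_iff) linarith

lemma hdom_subset_if_tip_in:
  assumes "tip P \<in> hdom Q" and "tip Q \<notin> hdom P"
  shows "hdom P \<subseteq> hdom Q"
  using assms by (auto simp: hdom_def split: if_splits)

lemma hdom_between:
  assumes "tip_le P Q" and "tip_le Q R"
  shows "hdom P \<inter> hdom R \<subseteq> hdom Q"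
  using assms by (auto simp: tip_le_def hdom_def)

lemma tip_le_trans: "tip_le P Q \<Longrightarrow> tip_le Q R \<Longrightarrow> tip_le P R"
  by (auto simp: tip_le_def)

lemma tip_le_total: "tip_le P Q \<or> tip_le Q P"
  by (auto simp: tip_le_def)

lemma hairpin_curve_disjoint_iff:
  "hairpin_curve P \<inter> hairpin_curve Q = {} \<longleftrightarrow>
    (\<forall>x\<in>hdom P \<inter> hdom Q. {lower P x, upper P x} \<inter> {lower Q x, upper Q x} = {})"
  unfolding hairpin_curve_def disjoint_iff by auto

lemma disjoint_hairpins_at_tip:
  assumes "wf_hairpin P" and "wf_hairpin Q"
    and disj: "hairpin_curve P \<inter> hairpin_curve Q = {}" and "tip P \<in> hdom Q"
  shows "below P Q \<or> below Q P \<or>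
    (\<forall>x\<in>hdom P \<inter> hdom Q. lower Q x < lower P x \<and> upper P x < upper Q x)"
proof -
  let ?J = "hdom P \<inter> hdom Q" and ?e = "tip P"
  have "connected ?J" by (simp add: convex_connected convex_Int)
  have e: "?e \<in> ?J" using assms(4) by simp
  have cont: "continuous_on ?J (lower P)" "continuous_on ?J (upper P)"
    "continuous_on ?J (lower Q)" "continuous_on ?J (upper Q)"
    using assms(1,2) by (auto simp: wf_hairpin_def intro: continuous_on_subset)
  have ne: "\<forall>x\<in>?J. upper P x \<noteq> lower Q x" "\<forall>x\<in>?J. upper Q x \<noteq> lower P x"
    "\<forall>x\<in>?J. lower Q x \<noteq> lower P x" "\<forall>x\<in>?J. upper P x \<noteq> upper Q x"
    using disj unfolding hairpin_curve_disjoint_iff by (auto dest: sym)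
  note propagate = continuous_on_less_on_connected[OF \<open>connected ?J\<close> _ _ _ e]
  txt \<open>The branches of P meet at its tip, so this single point lies strictly below, above or
    between the branches of Q; the sign pattern then propagates over the connected set J.\<close>
  have "lower P ?e = upper P ?e" and "lower Q ?e \<le> upper Q ?e"
    using assms(1,2,4) by (auto simp: wf_hairpin_def)
  then have "upper P ?e < lower Q ?e \<or> upper Q ?e < lower P ?e \<or>
      lower Q ?e < lower P ?e \<and> upper P ?e < upper Q ?e"
    using ne[THEN bspec, OF e] by linarith
  then show ?thesis
  proof (elim disjE conjE)
    assume "upper P ?e < lower Q ?e"
    then have "below P Q"
      using propagate[OF cont(2,3) ne(1)] by (simp add: below_def)
    then show ?thesis ..
  next
    assume "upper Q ?e < lower P ?e"
    then have "below Q P"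
      using propagate[OF cont(4,1) ne(2)] by (auto simp: below_def)
    then show ?thesis by blast
  next
    assume "lower Q ?e < lower P ?e" "upper P ?e < upper Q ?e"
    then show ?thesis
      using propagate[OF cont(3,1) ne(3)] propagate[OF cont(2,4) ne(4)] by blast
  qed
qed

lemma disjoint_hairpins_cases_at_tip:
  assumes P: "wf_hairpin P" and Q: "wf_hairpin Q"
    and disj: "hairpin_curve P \<inter> hairpin_curve Q = {}" and "tip P \<in> hdom Q"
  shows "nested_in P Q \<or> below P Q \<or> below Q P"
proof -
  consider "below P Q \<or> below Q P"
    | (inside) "\<forall>x\<in>hdom P \<inter> hdom Q. lower Q x < lower P x \<and> upper P x < upper Q x"
    using disjoint_hairpins_at_tip[OF assms] by blast
  then show ?thesis
  proof cases
    case inside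
    txt \<open>The branches of Q meet at its tip, which therefore cannot lie where they strictly
      enclose P.\<close>
    have "tip Q \<notin> hdom P"
    proof
      assume "tip Q \<in> hdom P"
      then have "lower Q (tip Q) < lower P (tip Q)" "lower P (tip Q) \<le> upper P (tip Q)"
        "upper P (tip Q) < upper Q (tip Q)"
        using inside P by (auto simp: wf_hairpin_def)
      then show False using Q by (simp add: wf_hairpin_def)
    qed
    then have "hdom P \<subseteq> hdom Q"
      using hdom_subset_if_tip_in \<open>tip P \<in> hdom Q\<close> by blast
    then have "nested_in P Q"
      using inside by (auto simp: nested_in_def)
    then show ?thesis ..
  qed blast
qed

lemma disjoint_hairpins_cases:
  assumes "wf_hairpin P" and "wf_hairpin Q" and disj: "hairpin_curve P \<inter> hairpin_curve Q = {}"
  shows "nested_in P Q \<or> nested_in Q P \<or> below P Q \<or> below Q P"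
proof -
  have disj': "hairpin_curve Q \<inter> hairpin_curve P = {}"
    using disj by blast
  consider "tip P \<in> hdom Q" | "tip Q \<in> hdom P" | "hdom P \<inter> hdom Q = {}"
    using tip_in_hdom_cases by blast
  then show ?thesis
  proof cases
    case 1
    then show ?thesis using disjoint_hairpins_cases_at_tip[OF assms] by blast
  next
    case 2
    then show ?thesis using disjoint_hairpins_cases_at_tip[OF assms(2,1) disj'] by blast
  next
    case 3
    then have "below P Q" by (simp add: below_def)
    then show ?thesis by blast
  qed
qed

lemma nested_in_irrefl: "\<not> nested_in P P"
  unfolding nested_in_def using tip_in_hdom less_irrefl by blast

lemma nested_in_trans:
  assumes "nested_in P Q" and "nested_in Q R"
  shows "nested_in P R"
  unfolding nested_in_def
proof
  show "hdom P \<subseteq> hdom R"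
    using assms unfolding nested_in_def by blast
  show "\<forall>x\<in>hdom P. lower R x < lower P x \<and> upper P x < upper R x"
  proof
    fix x assume "x \<in> hdom P"
    then have "x \<in> hdom Q" using assms(1) unfolding nested_in_def by blast
    then have "lower R x < lower Q x \<and> upper Q x < upper R x"
      "lower Q x < lower P x \<and> upper P x < upper Q x"
      using assms \<open>x \<in> hdom P\<close> unfolding nested_in_def by blast+
    then show "lower R x < lower P x \<and> upper P x < upper R x" by linarith
  qed
qed

lemma nested_in_disjoint:
  assumes "wf_hairpin P" and "nested_in P Q"
  shows "hairpin_curve P \<inter> hairpin_curve Q = {}"
  unfolding hairpin_curve_disjoint_iff
proof
  fix x assume "x \<in> hdom P \<inter> hdom Q"
  then have "lower Q x < lower P x \<and> upper P x < upper Q x" "lower P x \<le> upper P x"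
    using assms unfolding nested_in_def wf_hairpin_def by blast+
  then show "{lower P x, upper P x} \<inter> {lower Q x, upper Q x} = {}" by auto
qed

lemma below_irrefl: "wf_hairpin P \<Longrightarrow> \<not> below P P"
  unfolding below_def wf_hairpin_def using tip_in_hdom by (metis IntI less_irrefl)

lemma below_trans:
  assumes "wf_hairpin Q" and "below P Q" and "below Q R" and "hdom P \<inter> hdom R \<subseteq> hdom Q"
  shows "below P R"
  unfolding below_def
proof
  fix x assume x: "x \<in> hdom P \<inter> hdom R"
  then have "x \<in> hdom Q" using assms(4) by blast
  then have "upper P x < lower Q x" "lower Q x \<le> upper Q x" "upper Q x < lower R x"
    using assms(1-3) x unfolding below_def wf_hairpin_def by blast+
  then show "upper P x < lower R x" by linarith
qed

lemma below_disjoint: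
  assumes "wf_hairpin P" and "wf_hairpin Q" and "below P Q"
  shows "hairpin_curve P \<inter> hairpin_curve Q = {}"
  unfolding hairpin_curve_disjoint_iff
proof
  fix x assume "x \<in> hdom P \<inter> hdom Q"
  then have "lower P x \<le> upper P x" "upper P x < lower Q x" "lower Q x \<le> upper Q x"
    using assms unfolding below_def wf_hairpin_def by blast+
  then show "{lower P x, upper P x} \<inter> {lower Q x, upper Q x} = {}" by auto
qed

section \<open>Non-wide chains are hairpins\<close>

lemma two_way_inf_3mono_chain_ordered:
  assumes "two_way_inf_3mono_chain C"
  obtains a b R1 R3 f1 f2 f3 where "a \<le> b" and "closed_ray a R1" and "closed_ray b R3"
    and "continuous_on R1 f1" and "continuous_on {a..b} f2" and "continuous_on R3 f3"
    and "f1 a = f2 a" and "f2 b = f3 b"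
    and "C = xgraph R1 f1 \<union> xgraph {a..b} f2 \<union> xgraph R3 f3"
proof -
  obtain a b R1 R3 f1 f2 f3 where chain: "closed_ray a R1" "closed_ray b R3"
    "continuous_on R1 f1" "continuous_on (closed_segment a b) f2" "continuous_on R3 f3"
    "f1 a = f2 a" "f2 b = f3 b"
    "C = xgraph R1 f1 \<union> xgraph (closed_segment a b) f2 \<union> xgraph R3 f3"
    using assms unfolding two_way_inf_3mono_chain_def by blast
  show ?thesis
  proof (cases "a \<le> b")
    case True
    then show ?thesis
      using that[of a b R1 R3 f1 f2 f3] chain by (simp add: closed_segment_eq_real_ivl)
  next
    case False
    then show ?thesis
      using that[of b a R3 R1 f3 f2 f1] chain
      by (simp add: closed_segment_eq_real_ivl Un_commute Un_left_commute)
  qed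
qed

lemma hairpin_sort_branches:
  assumes "continuous_on (hdom P) (lower P)" and "continuous_on (hdom P) (upper P)"
    and "lower P (tip P) = upper P (tip P)"
  obtains Q where "wf_hairpin Q" and "hairpin_curve Q = hairpin_curve P"
proof
  let ?Q = "P\<lparr>lower := \<lambda>x. min (lower P x) (upper P x), upper := \<lambda>x. max (lower P x) (upper P x)\<rparr>"
  have "hdom ?Q = hdom P"
    by (simp add: hdom_def)
  then show "wf_hairpin ?Q"
    using assms by (auto simp: wf_hairpin_def intro: continuous_on_min continuous_on_max)
  have "(y = min u w \<or> y = max u w) \<longleftrightarrow> (y = u \<or> y = w)" for y u w :: real
    by (auto simp: min_def max_def)
  then show "hairpin_curve ?Q = hairpin_curve P"
    using \<open>hdom ?Q = hdom P\<close> by (simp add: hairpin_curve_def)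
qed

lemma hairpin_of_chain:
  assumes "two_way_inf_3mono_chain C" and "non_wide C"
  obtains P where "wf_hairpin P" and "C = hairpin_curve P"
proof -
  obtain a b R1 R3 f1 f2 f3 where "a \<le> b" and rays: "closed_ray a R1" "closed_ray b R3"
    and cont: "continuous_on R1 f1" "continuous_on {a..b} f2" "continuous_on R3 f3"
    and joints: "f1 a = f2 a" "f2 b = f3 b"
    and C: "C = xgraph R1 f1 \<union> xgraph {a..b} f2 \<union> xgraph R3 f3"
    using two_way_inf_3mono_chain_ordered[OF assms(1)] by blast
  obtain x0 where x0: "\<forall>p\<in>C. fst p \<noteq> x0"
    using assms(2) unfolding non_wide_def by blast
  txt \<open>x0 lies in none of the three projections; as a \<le> b, this rules out rays pointing in
    opposite directions.\<close>
  have "x0 \<notin> R1 \<union> {a..b} \<union> R3"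
    using x0 unfolding C xgraph_def by force
  then consider "R1 = {..a}" "R3 = {..b}" | "R1 = {a..}" "R3 = {b..}"
    using rays \<open>a \<le> b\<close> unfolding closed_ray_def by force
  then have "\<exists>P. continuous_on (hdom P) (lower P) \<and> continuous_on (hdom P) (upper P) \<and>
      lower P (tip P) = upper P (tip P) \<and> C = hairpin_curve P"
  proof cases
    case 1
    let ?P = "\<lparr>leftward = True, tip = b, lower = \<lambda>x. if x \<le> a then f1 x else f2 x, upper = f3\<rparr>"
    have "{x \<in> {..b}. x \<le> a} = {..a}" "{x \<in> {..b}. a \<le> x} = {a..b}"
      using \<open>a \<le> b\<close> by auto
    then have "continuous_on {..b} (\<lambda>x. if x \<le> a then f1 x else f2 x)"
      using cont(1,2) joints(1) 1 by (intro continuous_on_cases_1) auto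
    moreover have "C = hairpin_curve ?P"
      unfolding C 1 hairpin_curve_def hdom_def xgraph_def using \<open>a \<le> b\<close> joints
      by (auto simp: image_iff)
    ultimately show ?thesis
      using cont(3) joints \<open>a \<le> b\<close> 1 by (intro exI[of _ ?P]) (auto simp: hdom_def)
  next
    case 2
    let ?P = "\<lparr>leftward = False, tip = a, lower = f1, upper = \<lambda>x. if x \<le> b then f2 x else f3 x\<rparr>"
    have "{x \<in> {a..}. x \<le> b} = {a..b}" "{x \<in> {a..}. b \<le> x} = {b..}"
      using \<open>a \<le> b\<close> by auto
    then have "continuous_on {a..} (\<lambda>x. if x \<le> b then f2 x else f3 x)"
      using cont(2,3) joints(2) 2 by (intro continuous_on_cases_1) auto
    moreover have "C = hairpin_curve ?P"
      unfolding C 2 hairpin_curve_def hdom_def xgraph_def using \<open>a \<le> b\<close> joints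
      by (auto simp: image_iff split: if_splits)
    ultimately show ?thesis
      using cont(1) joints \<open>a \<le> b\<close> 2 by (intro exI[of _ ?P]) (auto simp: hdom_def)
  qed
  then show ?thesis
    using hairpin_sort_branches that by metis
qed

section \<open>Three orders covering the disjointness graph\<close>

definition disjointness_order :: "(hairpin \<Rightarrow> hairpin \<Rightarrow> bool) \<Rightarrow> bool" where
  "disjointness_order S \<longleftrightarrow>
     irreflp_on (Collect wf_hairpin) S \<and> transp_on (Collect wf_hairpin) S \<and>
     (\<forall>P Q. wf_hairpin P \<longrightarrow> wf_hairpin Q \<longrightarrow> S P Q \<longrightarrow>
        hairpin_curve P \<inter> hairpin_curve Q = {})"

lemma disjointness_order_nested_in: "disjointness_order nested_in"
  unfolding disjointness_order_def irreflp_on_def transp_on_def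
  using nested_in_irrefl nested_in_trans nested_in_disjoint by blast

lemma disjointness_order_below:
  assumes "\<And>P Q R. K P Q \<Longrightarrow> K Q R \<Longrightarrow> K P R \<and> hdom P \<inter> hdom R \<subseteq> hdom Q"
  shows "disjointness_order (\<lambda>P Q. below P Q \<and> K P Q)"
  unfolding disjointness_order_def
proof (intro conjI allI impI)
  show "irreflp_on (Collect wf_hairpin) (\<lambda>P Q. below P Q \<and> K P Q)"
    using below_irrefl by (auto simp: irreflp_on_def)
  show "transp_on (Collect wf_hairpin) (\<lambda>P Q. below P Q \<and> K P Q)"
  proof (rule transp_onI)
    fix P Q R assume "Q \<in> Collect wf_hairpin"
      and "below P Q \<and> K P Q" and "below Q R \<and> K Q R"
    then show "below P R \<and> K P R"
      using assms below_trans by blast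
  qed
  show "hairpin_curve P \<inter> hairpin_curve Q = {}"
    if "wf_hairpin P" "wf_hairpin Q" "below P Q \<and> K P Q" for P Q
    using below_disjoint that by blast
qed

definition hairpin_orders :: "(hairpin \<Rightarrow> hairpin \<Rightarrow> bool) list" where
  "hairpin_orders = [nested_in, \<lambda>P Q. below P Q \<and> tip_le P Q, \<lambda>P Q. below P Q \<and> tip_le Q P]"

lemma disjointness_order_hairpin_orders:
  assumes "S \<in> set hairpin_orders"
  shows "disjointness_order S"
proof -
  have "disjointness_order (\<lambda>P Q. below P Q \<and> tip_le P Q)"
    using tip_le_trans hdom_between by (intro disjointness_order_below) blast
  moreover have "disjointness_order (\<lambda>P Q. below P Q \<and> tip_le Q P)"
    using tip_le_trans hdom_between by (intro disjointness_order_below) blast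
  ultimately show ?thesis
    using assms disjointness_order_nested_in by (auto simp: hairpin_orders_def)
qed

lemma hairpin_orders_cover:
  assumes "wf_hairpin P" and "wf_hairpin Q" and "hairpin_curve P \<inter> hairpin_curve Q = {}"
  shows "\<exists>S\<in>set hairpin_orders. S P Q \<or> S Q P"
  using disjoint_hairpins_cases[OF assms] tip_le_total[of P Q]
  unfolding hairpin_orders_def by auto

lemma disjointness_order_pullback:
  assumes S: "disjointness_order S"
    and H: "\<forall>v\<in>V. wf_hairpin (H v) \<and> C v = hairpin_curve (H v)"
  shows "irreflp_on V (\<lambda>u v. S (H u) (H v)) \<and> transp_on V (\<lambda>u v. S (H u) (H v))"
    and "u \<in> V \<Longrightarrow> v \<in> V \<Longrightarrow> S (H u) (H v) \<Longrightarrow> disjointness_edge C u v"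
proof -
  have irrefl: "\<not> S (H v) (H v)" if "v \<in> V" for v
    using S H that unfolding disjointness_order_def irreflp_on_def by blast
  show "irreflp_on V (\<lambda>u v. S (H u) (H v)) \<and> transp_on V (\<lambda>u v. S (H u) (H v))"
    using S H irrefl unfolding disjointness_order_def irreflp_on_def transp_on_def by blast
  show "disjointness_edge C u v" if "u \<in> V" "v \<in> V" "S (H u) (H v)"
  proof -
    have "u \<noteq> v" using irrefl that by blast
    moreover have "C u \<inter> C v = {}"
      using S H that unfolding disjointness_order_def by metis
    ultimately show ?thesis by (simp add: disjointness_edge_def)
  qed
qed

theorem mainTheorem11:
  fixes V :: "'v set" and C :: "'v \<Rightarrow> (real \<times> real) set"
  assumes "finite V"
    and "\<And>v. v \<in> V \<Longrightarrow> two_way_inf_3mono_chain (C v)"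
    and "\<And>v. v \<in> V \<Longrightarrow> non_wide (C v)"
  shows "chromatic_number V (disjointness_edge C)
           \<le> (clique_number V (disjointness_edge C)) ^ 3"
proof -
  have "\<forall>v\<in>V. \<exists>P. wf_hairpin P \<and> C v = hairpin_curve P"
    using hairpin_of_chain assms(2,3) by metis
  then have "\<exists>H. \<forall>v\<in>V. wf_hairpin (H v) \<and> C v = hairpin_curve (H v)"
    by (rule bchoice)
  then obtain H where H: "\<forall>v\<in>V. wf_hairpin (H v) \<and> C v = hairpin_curve (H v)"
    by blast
  note pullback = disjointness_order_pullback[OF disjointness_order_hairpin_orders H]
  let ?Rs = "map (\<lambda>S u v. S (H u) (H v)) hairpin_orders"
  have "chromatic_number V (disjointness_edge C) \<le> clique_number V (disjointness_edge C) ^ length ?Rs"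
  proof (rule chromatic_number_le_clique_number_power[OF assms(1)])
    show "symp (disjointness_edge C)"
      by (auto simp: symp_def disjointness_edge_def)
    show "irreflp_on V R \<and> transp_on V R" if "R \<in> set ?Rs" for R
      using that pullback(1) by auto
    show "disjointness_edge C u v" if "R \<in> set ?Rs" "u \<in> V" "v \<in> V" "R u v" for R u v
      using that pullback(2) by auto
    show "\<exists>R\<in>set ?Rs. R u v \<or> R v u" if "u \<in> V" "v \<in> V" "disjointness_edge C u v" for u v
      using hairpin_orders_cover[of "H u" "H v"] H that by (auto simp: disjointness_edge_def)
  qed
  moreover have "length ?Rs = 3"
    by (simp add: hairpin_orders_def)
  ultimately show ?thesis
    by simp
qed

end
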